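(* For every $\ell\ge1$, $E_\ell$ is a closed subset of $\mathcal M_F(\mathcal I\times\mathbb R^\ell)$ for the topology of weak convergence of measures.
   Context: $\mathcal I=\{\varnothing\}\cup\bigcup_{n\ge1}\mathbb N^n$ is the set of finite words over $\mathbb N=\{0,1,\dots\}$ with concatenation $ij$; $j\prec i$ iff $i=j\ell$ for some nonempty word $\ell$. $\mathcal I\times\mathbb R^\ell$ carries the metric $d((i,x),(j,y))=d^{\mathcal I}(i,j)+|x-y|$, where for $i=i_1\cdots i_n$, $j=j_1\cdots j_m$ with longest common prefix of length $p$, $d^{\mathcal I}(i,j)=\sum_{k=p+1}^n(i_k+1)+\sum_{k=p+1}^m(j_k+1)$ (so $\mathcal I$ is discrete). $\mathcal M_F(\mathcal I\times\mathbb R^\ell)$ is the set of finite measures on $\mathcal I\times\mathbb R^\ell$ with the weak topology ($\nu_n\to\nu$ iff $\int fd\nu_n\to\int fd\nu$ for all bounded continuous $f$). $E_\ell$ is the set of measures $\sum_{i\in V}\delta_{(i,x_i)}$ with $V\subset\mathcal I$ finite, $x_i\in\mathbb R^\ell$, and no $i,j\in V$ with $i\prec j$. *)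

theory Defs
  imports "HOL-Analysis.Analysis"
begin

definition word_prec :: "nat list \<Rightarrow> nat list \<Rightarrow> bool" where
  "word_prec j i \<longleftrightarrow> (\<exists>l. l \<noteq> [] \<and> i = j @ l)"

fun lcp_len :: "nat list \<Rightarrow> nat list \<Rightarrow> nat" where
  "lcp_len (a # as) (b # bs) = (if a = b then Suc (lcp_len as bs) else 0)"
| "lcp_len _ _ = 0"

definition dI :: "nat list \<Rightarrow> nat list \<Rightarrow> real" where
  "dI i j = real (sum_list (map Suc (drop (lcp_len i j) i))
                 + sum_list (map Suc (drop (lcp_len i j) j)))"

definition dIR :: "nat list \<times> (real ^ 'n) \<Rightarrow> nat list \<times> (real ^ 'n) \<Rightarrow> real" where
  "dIR p q = dI (fst p) (fst q) + norm (snd p - snd q)"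

definition bcont :: "(nat list \<times> (real ^ 'n) \<Rightarrow> real) \<Rightarrow> bool" where
  "bcont f \<longleftrightarrow> (\<exists>B. \<forall>p. \<bar>f p\<bar> \<le> B) \<and>
     (\<forall>p. \<forall>e>0. \<exists>d>0. \<forall>q. dIR p q < d \<longrightarrow> \<bar>f q - f p\<bar> < e)"

text \<open>The Borel sigma-algebra of I x R^l (I countable discrete).\<close>
definition IRspace :: "(nat list \<times> (real ^ 'n)) measure" where
  "IRspace = count_space UNIV \<Otimes>\<^sub>M borel"

definition MF :: "(nat list \<times> (real ^ 'n)) measure set" where
  "MF = {\<nu>. sets \<nu> = sets (IRspace :: (nat list \<times> (real ^ 'n)) measure) \<and> finite_measure \<nu>}"

definition weak_top :: "(nat list \<times> (real ^ 'n)) measure topology" where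
  "weak_top = topology_generated_by
     {{\<nu> \<in> MF. (\<integral>x. f x \<partial>\<nu>) \<in> U} | f U. bcont f \<and> open U}"

text \<open>E_l: measures sum_{i in V} delta_(i, x_i), V finite antichain for the prefix order.
  The sum of Dirac masses is written out via its values on measurable sets.\<close>
definition E :: "(nat list \<times> (real ^ 'n)) measure set" where
  "E = {\<nu>. \<exists>V x. finite V \<and> (\<forall>i\<in>V. \<forall>j\<in>V. \<not> word_prec i j) \<and>
           sets \<nu> = sets (IRspace :: (nat list \<times> (real ^ 'n)) measure) \<and>
           (\<forall>A \<in> sets \<nu>. emeasure \<nu> A = of_nat (card {i \<in> V. (i, x i) \<in> A}))}"

end

(*
  Since the words form a discrete space, (i, x) \<mapsto> [i \<in> S] g x is bounded continuous
  whenever g is, so the mass m(S) of S \<times> \<real>^l and the integrals of arctan x\<^sub>k and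
  (arctan x\<^sub>k)\<^sup>2 over a fibre {i} \<times> \<real>^l are weakly continuous in the measure.
  A finite measure lies in E iff all m({i}) and all m({i, j}) with i \<prec> j lie in {0, 1}
  and every coordinate arctan x\<^sub>k has zero variance on each fibre: the fibres of mass one
  are then finitely many (the total mass is finite), form an antichain (otherwise
  m({i, j}) = 2), and each carries a single Dirac mass. E is therefore an intersection
  of preimages of closed sets under continuous maps.
*)

theory Submission
  imports Defs
begin

lemma AE_eq_mean_if_zero_variance:
  fixes g :: "'a \<Rightarrow> real"
  assumes A: "A \<in> sets M" "measure M A = 1"
    and int: "set_integrable M A g" "set_integrable M A (\<lambda>x. (g x)\<^sup>2)"
    and var: "(LINT x:A|M. (g x)\<^sup>2) = (LINT x:A|M. g x)\<^sup>2"
  shows "AE x in M. x \<in> A \<longrightarrow> g x = (LINT x:A|M. g x)"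
proof -
  define c where "c = (LINT x:A|M. g x)"
  have fin: "emeasure M A \<noteq> \<infinity>"
    using A(2) by (auto simp: measure_def)
  have const: "set_integrable M A (\<lambda>_. c\<^sup>2)"
    using A(1) fin by (simp add: set_integrable_def less_top)
  have expand: "(g x - c)\<^sup>2 = (g x)\<^sup>2 - 2 * c * g x + c\<^sup>2" for x
    by (simp add: power2_eq_square algebra_simps)
  have "(LINT x:A|M. (g x - c)\<^sup>2) = (LINT x:A|M. (g x)\<^sup>2) - 2 * c * c + c\<^sup>2"
    unfolding expand using int const A fin by (simp add: set_integral_const c_def)
  also have "\<dots> = 0"
    using var by (simp add: c_def power2_eq_square)
  finally have "(LINT x:A|M. (g x - c)\<^sup>2) = 0" .
  moreover have "set_integrable M A (\<lambda>x. (g x - c)\<^sup>2)"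
    unfolding expand using int const by simp
  ultimately have "AE x in M. indicator A x * (g x - c)\<^sup>2 = 0"
    unfolding set_lebesgue_integral_def set_integrable_def
    by (subst integral_nonneg_eq_0_iff_AE[symmetric]) auto
  then show ?thesis
    unfolding c_def[symmetric] by eventually_elim (simp add: indicator_def)
qed

lemma (in finite_measure) finite_unit_measure_family:
  assumes "disjoint_family A" "\<And>i. A i \<in> sets M"
  shows "finite {i. measure M (A i) = 1}"
proof -
  have "card G \<le> nat \<lceil>measure M (space M)\<rceil>" if "G \<subseteq> {i. measure M (A i) = 1}" "finite G" for G
  proof -
    have "real (card G) = (\<Sum>i\<in>G. measure M (A i))"
      using that(1) by (simp add: subset_eq)
    also have "\<dots> = measure M (\<Union>i\<in>G. A i)"
      using that(2) assms disjoint_family_on_mono[OF subset_UNIV assms(1)]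
      by (intro finite_measure_finite_Union[symmetric]) auto
    also have "\<dots> \<le> measure M (space M)"
      by (rule bounded_measure)
    finally show ?thesis
      by linarith
  qed
  then show ?thesis
    using finite_if_finite_subsets_card_bdd by blast
qed

lemma closedin_Collect_all_preimage:
  assumes "\<And>a. a \<in> A \<Longrightarrow> continuous_map X euclideanreal (f a)"
    and "\<And>a. a \<in> A \<Longrightarrow> closed (C a)"
  shows "closedin X {x \<in> topspace X. \<forall>a\<in>A. f a x \<in> C a}"
proof (cases "A = {}")
  case False
  then have "{x \<in> topspace X. \<forall>a\<in>A. f a x \<in> C a} = (\<Inter>a\<in>A. {x \<in> topspace X. f a x \<in> C a})"
    by auto
  also have "closedin X \<dots>"
    using assms False by (intro closedin_INT closedin_continuous_map_preimage) auto
  finally show ?thesis .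
qed simp

lemma abs_arctan_le: "\<bar>arctan t\<bar> \<le> pi / 2"
  using arctan_bounded[of t] by linarith

lemma abs_arctan_square_le: "\<bar>(arctan t)\<^sup>2\<bar> \<le> (pi / 2)\<^sup>2"
  using power_mono[OF abs_arctan_le abs_ge_zero, of t 2] by simp

lemma drop_lcp_len_Nil_imp_eq:
  "drop (lcp_len i j) i = [] \<Longrightarrow> drop (lcp_len i j) j = [] \<Longrightarrow> i = j"
  by (induction i j rule: lcp_len.induct) (auto split: if_splits)

lemma dI_nonneg: "0 \<le> dI i j"
  by (simp add: dI_def)

lemma dI_less_one_imp_eq:
  assumes "dI i j < 1"
  shows "i = j"
proof -
  have sum_Suc_eq_0: "sum_list (map Suc xs) = 0 \<longleftrightarrow> xs = []" for xs
    by (cases xs) auto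
  have "real (sum_list (map Suc (drop (lcp_len i j) i)) + sum_list (map Suc (drop (lcp_len i j) j))) < 1"
    using assms unfolding dI_def .
  then have "sum_list (map Suc (drop (lcp_len i j) i)) + sum_list (map Suc (drop (lcp_len i j) j)) = 0"
    by (simp only: of_nat_less_1_iff)
  then have "drop (lcp_len i j) i = []" "drop (lcp_len i j) j = []"
    by (simp_all only: add_is_0 sum_Suc_eq_0)
  then show ?thesis
    by (rule drop_lcp_len_Nil_imp_eq)
qed

lemma dIR_less_one_imp_fst_eq:
  assumes "dIR p q < 1"
  shows "fst q = fst p"
proof -
  have "dI (fst p) (fst q) < 1"
    using assms norm_ge_zero[of "snd p - snd q"] unfolding dIR_def by linarith
  then show ?thesis
    by (rule dI_less_one_imp_eq[symmetric])
qed

lemma dist_snd_le_dIR: "dist (snd q) (snd p) \<le> dIR p q"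
  using dI_nonneg[of "fst p" "fst q"] by (simp add: dIR_def dist_norm norm_minus_commute)

lemma bcont_indicator_Times_UNIV:
  fixes g :: "real ^ 'n \<Rightarrow> real"
  assumes g: "continuous_on UNIV g" and B: "\<And>v. \<bar>g v\<bar> \<le> B"
  shows "bcont (\<lambda>p. indicator (S \<times> UNIV) p *\<^sub>R g (snd p))"
  unfolding bcont_def
proof (intro conjI allI impI)
  show "\<exists>B. \<forall>p. \<bar>indicator (S \<times> UNIV) p *\<^sub>R g (snd p)\<bar> \<le> B"
    using B order_trans[OF abs_ge_zero B] by (intro exI[of _ B]) (auto simp: indicator_def)
next
  fix p :: "nat list \<times> (real ^ 'n)" and e :: real
  assume "e > 0"
  moreover have "isCont g (snd p)"
    using g by (simp add: continuous_on_eq_continuous_at)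
  ultimately obtain d where d: "d > 0" "\<And>v. dist v (snd p) < d \<Longrightarrow> \<bar>g v - g (snd p)\<bar> < e"
    unfolding continuous_at_eps_delta dist_real_def by blast
  have "\<bar>indicator (S \<times> UNIV) q *\<^sub>R g (snd q) - indicator (S \<times> UNIV) p *\<^sub>R g (snd p)\<bar> < e"
    if "dIR p q < min d 1" for q
    using that d(2)[of "snd q"] dIR_less_one_imp_fst_eq[of p q] dist_snd_le_dIR[of q p] \<open>e > 0\<close>
    by (auto simp: indicator_def mem_Times_iff)
  with d(1) show "\<exists>d>0. \<forall>q. dIR p q < d \<longrightarrow>
      \<bar>indicator (S \<times> UNIV) q *\<^sub>R g (snd q) - indicator (S \<times> UNIV) p *\<^sub>R g (snd p)\<bar> < e"
    by (intro exI[of _ "min d 1"]) auto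
qed

lemma sets_IRspace_Times: "B \<in> sets borel \<Longrightarrow> S \<times> B \<in> sets (IRspace :: (nat list \<times> (real ^ 'n)) measure)"
  by (simp add: IRspace_def pair_measureI)

lemma measurable_graph_IRspace:
  "(\<lambda>i. (i, x i)) \<in> measurable (count_space V) (IRspace :: (nat list \<times> (real ^ 'n)) measure)"
  by (simp add: IRspace_def space_pair_measure)

lemma MF_D:
  assumes "\<mu> \<in> (MF :: (nat list \<times> (real ^ 'n)) measure set)"
  shows "sets \<mu> = sets (IRspace :: (nat list \<times> (real ^ 'n)) measure)" "space \<mu> = UNIV" "finite_measure \<mu>"
proof -
  show sets: "sets \<mu> = sets (IRspace :: (nat list \<times> (real ^ 'n)) measure)" "finite_measure \<mu>"
    using assms by (simp_all add: MF_def)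
  show "space \<mu> = UNIV"
    using sets_eq_imp_space_eq[OF sets(1)] by (simp add: IRspace_def space_pair_measure)
qed

lemma sets_MF_Times: "\<mu> \<in> (MF :: (nat list \<times> (real ^ 'n)) measure set) \<Longrightarrow> S \<times> UNIV \<in> sets \<mu>"
  using MF_D(1)[of \<mu>] sets_IRspace_Times[of UNIV S] by simp

lemma sets_MF_singleton: "\<mu> \<in> (MF :: (nat list \<times> (real ^ 'n)) measure set) \<Longrightarrow> {q} \<in> sets \<mu>"
  using MF_D(1)[of \<mu>] sets_IRspace_Times[of "{snd q}" "{fst q}"] by simp

lemma measure_Times_doubleton:
  assumes "\<mu> \<in> (MF :: (nat list \<times> (real ^ 'n)) measure set)" "i \<noteq> j"
  shows "measure \<mu> ({i, j} \<times> UNIV) = measure \<mu> ({i} \<times> UNIV) + measure \<mu> ({j} \<times> UNIV)"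
proof -
  interpret finite_measure \<mu>
    using MF_D(3)[OF assms(1)] .
  have "measure \<mu> ({i, j} \<times> UNIV) = measure \<mu> ({i} \<times> UNIV \<union> {j} \<times> UNIV)"
    by (rule arg_cong[where f = "measure \<mu>"]) auto
  also have "\<dots> = measure \<mu> ({i} \<times> UNIV) + measure \<mu> ({j} \<times> UNIV)"
    using assms by (intro finite_measure_Union sets_MF_Times) auto
  finally show ?thesis .
qed

lemma set_integrable_MF:
  fixes g :: "real ^ 'n \<Rightarrow> real"
  assumes \<mu>: "\<mu> \<in> MF" and g: "g \<in> borel_measurable borel" "\<And>v. \<bar>g v\<bar> \<le> B"
  shows "set_integrable \<mu> (S \<times> UNIV) (\<lambda>p. g (snd p))"
proof -
  interpret finite_measure \<mu>
    using MF_D(3)[OF \<mu>] .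
  have measurable: "(\<lambda>p. indicator (S \<times> UNIV) p *\<^sub>R g (snd p)) \<in> borel_measurable \<mu>"
    using g(1) MF_D(1)[OF \<mu>] sets_IRspace_Times[of UNIV S]
    by (simp add: IRspace_def cong: measurable_cong_sets)
  have bounded: "AE p in \<mu>. norm (indicator (S \<times> UNIV) p *\<^sub>R g (snd p)) \<le> B"
    using g(2) order_trans[OF abs_ge_zero g(2)] by (intro AE_I2) (auto simp: indicator_def)
  show ?thesis
    unfolding set_integrable_def by (rule integrable_const_bound[OF bounded measurable])
qed

lemma topspace_weak_top: "topspace (weak_top :: (nat list \<times> (real ^ 'n)) measure topology) = MF"
  unfolding weak_top_def topology_generated_by_topspace
proof (intro equalityI subsetI)
  fix \<nu> :: "(nat list \<times> (real ^ 'n)) measure"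
  assume "\<nu> \<in> MF"
  moreover have "bcont (\<lambda>_::nat list \<times> (real ^ 'n). 0::real)"
    by (auto simp: bcont_def)
  ultimately show "\<nu> \<in> \<Union> {{\<nu> \<in> MF. (\<integral>x. f x \<partial>\<nu>) \<in> U} | f U. bcont f \<and> open U}"
    by (intro UnionI[of "{\<nu> \<in> MF. (\<integral>x. 0 \<partial>\<nu>) \<in> UNIV}"]) blast+
qed auto

lemma continuous_map_weak_top_integral:
  assumes "bcont f"
  shows "continuous_map (weak_top :: (nat list \<times> (real ^ 'n)) measure topology) euclideanreal (\<lambda>\<nu>. \<integral>x. f x \<partial>\<nu>)"
  unfolding continuous_map_def topspace_weak_top
proof (intro conjI allI impI)
  fix U :: "real set"
  assume "openin euclideanreal U"
  with assms have "{\<nu> \<in> MF. (\<integral>x. f x \<partial>\<nu>) \<in> U} \<in> {{\<nu> \<in> MF. (\<integral>x. f x \<partial>\<nu>) \<in> U} | f U. bcont f \<and> open U}"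
    by auto
  then show "openin weak_top {\<nu> \<in> MF. (\<integral>x. f x \<partial>\<nu>) \<in> U}"
    unfolding weak_top_def by (rule topology_generated_by_Basis)
qed auto

lemma continuous_map_weak_top_set_integral:
  fixes g :: "real ^ 'n \<Rightarrow> real"
  assumes "continuous_on UNIV g" "\<And>v. \<bar>g v\<bar> \<le> B"
  shows "continuous_map (weak_top :: (nat list \<times> (real ^ 'n)) measure topology) euclideanreal
    (\<lambda>\<nu>. LINT p:S \<times> UNIV|\<nu>. g (snd p))"
  unfolding set_lebesgue_integral_def
  by (intro continuous_map_weak_top_integral bcont_indicator_Times_UNIV[OF assms])

lemma continuous_map_weak_top_measure_Times:
  "continuous_map (weak_top :: (nat list \<times> (real ^ 'n)) measure topology) euclideanreal (\<lambda>\<nu>. measure \<nu> (S \<times> UNIV))"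
proof (rule continuous_map_eq)
  show "continuous_map (weak_top :: (nat list \<times> (real ^ 'n)) measure topology) euclideanreal
      (\<lambda>\<nu>. LINT p:S \<times> UNIV|\<nu>. 1)"
    by (rule continuous_map_weak_top_set_integral[of _ 1]) auto
  show "(LINT p:S \<times> UNIV|\<nu>. 1) = measure \<nu> (S \<times> UNIV)" if "\<nu> \<in> topspace weak_top" for \<nu> :: "(nat list \<times> (real ^ 'n)) measure"
    using that MF_D(2)[of \<nu>] by (simp add: topspace_weak_top set_lebesgue_integral_def)
qed

lemma E_imp_distr:
  assumes "\<mu> \<in> (E :: (nat list \<times> (real ^ 'n)) measure set)"
  obtains V x where "finite V" "\<forall>i\<in>V. \<forall>j\<in>V. \<not> word_prec i j"
    "\<mu> = distr (count_space V) IRspace (\<lambda>i. (i, x i))"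
proof -
  obtain V x where V: "finite V" "\<forall>i\<in>V. \<forall>j\<in>V. \<not> word_prec i j"
    and sets: "sets \<mu> = sets (IRspace :: (nat list \<times> (real ^ 'n)) measure)"
    and count: "\<forall>A \<in> sets \<mu>. emeasure \<mu> A = of_nat (card {i \<in> V. (i, x i) \<in> A})"
    using assms unfolding E_def by blast
  have "\<mu> = distr (count_space V) IRspace (\<lambda>i. (i, x i))"
  proof (rule measure_eqI)
    fix A
    assume "A \<in> sets \<mu>"
    moreover have "(\<lambda>i. (i, x i)) -` A \<inter> V = {i \<in> V. (i, x i) \<in> A}"
      by auto
    ultimately show "emeasure \<mu> A = emeasure (distr (count_space V) IRspace (\<lambda>i. (i, x i))) A"
      using sets count V(1) by (simp add: emeasure_distr[OF measurable_graph_IRspace] emeasure_count_space_finite)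
  qed (use sets in simp)
  with V that show ?thesis
    by blast
qed

lemma set_integral_distr_graph:
  fixes x :: "nat list \<Rightarrow> real ^ 'n" and g :: "real ^ 'n \<Rightarrow> real"
  assumes "finite V" "g \<in> borel_measurable borel"
  shows "(LINT p:S \<times> UNIV|distr (count_space V) IRspace (\<lambda>i. (i, x i)). g (snd p)) = (\<Sum>i\<in>V \<inter> S. g (x i))"
proof -
  have "(\<lambda>p. indicator (S \<times> UNIV) p *\<^sub>R g (snd p)) \<in> borel_measurable (IRspace :: (nat list \<times> (real ^ 'n)) measure)"
    using assms(2) sets_IRspace_Times[of UNIV S] by (simp add: IRspace_def)
  then show ?thesis
    unfolding set_lebesgue_integral_def using assms(1)
    by (simp add: integral_distr[OF measurable_graph_IRspace] lebesgue_integral_count_space_finite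
        sum.inter_restrict indicator_def)
qed

lemma E_subset_MF: "(E :: (nat list \<times> (real ^ 'n)) measure set) \<subseteq> MF"
proof
  fix \<mu> :: "(nat list \<times> (real ^ 'n)) measure"
  assume "\<mu> \<in> E"
  then obtain V x where "finite V" and \<mu>: "\<mu> = distr (count_space V) IRspace (\<lambda>i. (i, x i))"
    by (rule E_imp_distr)
  then have "finite_measure \<mu>"
    by (simp add: finite_measure_count_space finite_measure.finite_measure_distr[OF _ measurable_graph_IRspace])
  then show "\<mu> \<in> MF"
    unfolding MF_def \<mu> by simp
qed

definition E_criterion :: "(nat list \<times> (real ^ 'n)) measure \<Rightarrow> bool" where
  "E_criterion \<mu> \<longleftrightarrow>
     (\<forall>i. measure \<mu> ({i} \<times> UNIV) \<in> {0, 1}) \<and>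
     (\<forall>i j. word_prec i j \<longrightarrow> measure \<mu> ({i, j} \<times> UNIV) \<in> {0, 1}) \<and>
     (\<forall>i k. (LINT p:{i} \<times> UNIV|\<mu>. (arctan (snd p $ k))\<^sup>2) = (LINT p:{i} \<times> UNIV|\<mu>. arctan (snd p $ k))\<^sup>2)"

lemma closedin_E_criterion:
  "closedin weak_top {\<mu> \<in> topspace (weak_top :: (nat list \<times> (real ^ 'n)) measure topology). E_criterion \<mu>}"
proof -
  let ?T = "weak_top :: (nat list \<times> (real ^ 'n)) measure topology"
  let ?var = "\<lambda>(i, k) \<mu>. (LINT p:{i} \<times> UNIV|\<mu>. (arctan (snd p $ k))\<^sup>2) - (LINT p:{i} \<times> UNIV|\<mu>. arctan (snd p $ k))\<^sup>2"
  have mass: "closedin ?T {\<mu> \<in> topspace ?T. \<forall>a\<in>I. measure \<mu> (S a \<times> UNIV) \<in> {0, 1}}"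
    for I and S :: "'a \<Rightarrow> nat list set"
    by (intro closedin_Collect_all_preimage continuous_map_weak_top_measure_Times) auto
  have "continuous_map ?T euclideanreal (?var a)" for a
    by (cases a) (simp, intro continuous_map_diff continuous_map_real_pow continuous_intros
        continuous_map_weak_top_set_integral[OF _ abs_arctan_le]
        continuous_map_weak_top_set_integral[OF _ abs_arctan_square_le])
  then have variance: "closedin ?T {\<mu> \<in> topspace ?T. \<forall>a\<in>UNIV. ?var a \<mu> \<in> {0}}"
    by (intro closedin_Collect_all_preimage) auto
  have "{\<mu> \<in> topspace ?T. E_criterion \<mu>} =
      {\<mu> \<in> topspace ?T. \<forall>i\<in>UNIV. measure \<mu> ({i} \<times> UNIV) \<in> {0, 1}} \<inter>
      {\<mu> \<in> topspace ?T. \<forall>(i, j)\<in>{(i, j). word_prec i j}. measure \<mu> ({i, j} \<times> UNIV) \<in> {0, 1}} \<inter>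
      {\<mu> \<in> topspace ?T. \<forall>a\<in>UNIV. ?var a \<mu> \<in> {0}}"
    by (auto simp: E_criterion_def)
  moreover have "closedin ?T {\<mu> \<in> topspace ?T. \<forall>(i, j)\<in>{(i, j). word_prec i j}. measure \<mu> ({i, j} \<times> UNIV) \<in> {0, 1}}"
    using mass[of "{(i, j). word_prec i j}" "\<lambda>(i, j). {i, j}"] by (simp add: case_prod_beta)
  ultimately show ?thesis
    using mass[of UNIV "\<lambda>i. {i}"] variance by (simp add: closedin_Int)
qed

lemma E_imp_E_criterion:
  assumes "\<mu> \<in> (E :: (nat list \<times> (real ^ 'n)) measure set)"
  shows "E_criterion \<mu>"
proof -
  obtain V x where V: "finite V" "\<forall>i\<in>V. \<forall>j\<in>V. \<not> word_prec i j"
    and \<mu>: "\<mu> = distr (count_space V) IRspace (\<lambda>i. (i, x i))"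
    using assms by (rule E_imp_distr)
  have set_integral: "(LINT p:S \<times> UNIV|\<mu>. g (snd p)) = (\<Sum>i\<in>V \<inter> S. g (x i))"
    if "g \<in> borel_measurable borel" for S and g :: "real ^ 'n \<Rightarrow> real"
    unfolding \<mu> using V(1) that by (rule set_integral_distr_graph)
  have mass: "measure \<mu> (S \<times> UNIV) = card (V \<inter> S)" for S
  proof -
    have "measure \<mu> (S \<times> UNIV) = (LINT p:S \<times> UNIV|\<mu>. 1)"
      using MF_D(2)[of \<mu>] assms E_subset_MF by (auto simp: set_lebesgue_integral_def)
    then show ?thesis
      using set_integral[of "\<lambda>_. 1" S] by simp
  qed
  have card_0_or_1: "real (card (V \<inter> {i, j})) \<in> {0, 1}" if "i = j \<or> word_prec i j" for i j
  proof -
    have "card (V \<inter> {i, j}) \<le> 1"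
      using V(2) that by (cases "i \<in> V"; cases "j \<in> V") (auto simp: card_insert_if)
    then have "card (V \<inter> {i, j}) = 0 \<or> card (V \<inter> {i, j}) = 1"
      by linarith
    then show ?thesis
      by auto
  qed
  have variance: "(LINT p:{i} \<times> UNIV|\<mu>. (arctan (snd p $ k))\<^sup>2) = (LINT p:{i} \<times> UNIV|\<mu>. arctan (snd p $ k))\<^sup>2"
    for i k
  proof -
    have "(LINT p:{i} \<times> UNIV|\<mu>. (arctan (snd p $ k))\<^sup>2) = (\<Sum>l\<in>V \<inter> {i}. (arctan (x l $ k))\<^sup>2)"
      by (rule set_integral) (intro borel_measurable_continuous_onI continuous_intros)
    moreover have "(LINT p:{i} \<times> UNIV|\<mu>. arctan (snd p $ k)) = (\<Sum>l\<in>V \<inter> {i}. arctan (x l $ k))"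
      by (rule set_integral) (intro borel_measurable_continuous_onI continuous_intros)
    ultimately show ?thesis
      by (cases "i \<in> V") auto
  qed
  show ?thesis
    unfolding E_criterion_def mass using card_0_or_1 variance by auto
qed

lemma AE_fibre_eq_const:
  fixes \<mu> :: "(nat list \<times> (real ^ 'n)) measure"
  assumes \<mu>: "\<mu> \<in> MF" and mass: "measure \<mu> ({i} \<times> UNIV) = 1"
    and variance: "\<And>k. (LINT p:{i} \<times> UNIV|\<mu>. (arctan (snd p $ k))\<^sup>2) = (LINT p:{i} \<times> UNIV|\<mu>. arctan (snd p $ k))\<^sup>2"
  shows "\<exists>v. AE p in \<mu>. fst p = i \<longrightarrow> snd p = v"
proof -
  let ?A = "{i} \<times> (UNIV :: (real ^ 'n) set)"
  define b where "b k = (LINT p:?A|\<mu>. arctan (snd p $ k))" for k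
  have sets: "?A \<in> sets \<mu>"
    by (rule sets_MF_Times[OF \<mu>])
  have "AE p in \<mu>. p \<in> ?A \<longrightarrow> arctan (snd p $ k) = b k" for k
    unfolding b_def
  proof (rule AE_eq_mean_if_zero_variance[OF sets mass _ _ variance])
    show "set_integrable \<mu> ?A (\<lambda>p. arctan (snd p $ k))"
      by (rule set_integrable_MF[OF \<mu> _ abs_arctan_le]) (intro borel_measurable_continuous_onI continuous_intros)
    show "set_integrable \<mu> ?A (\<lambda>p. (arctan (snd p $ k))\<^sup>2)"
      by (rule set_integrable_MF[OF \<mu> _ abs_arctan_square_le]) (intro borel_measurable_continuous_onI continuous_intros)
  qed
  then have coords: "AE p in \<mu>. \<forall>k\<in>UNIV. p \<in> ?A \<longrightarrow> arctan (snd p $ k) = b k"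
    by (intro AE_finite_allI) auto
  have "\<exists>p\<in>?A. \<forall>k. arctan (snd p $ k) = b k"
  proof (rule ccontr)
    assume none: "\<not> ?thesis"
    from coords have "AE p in \<mu>. p \<notin> ?A"
      by eventually_elim (use none in auto)
    then have "emeasure \<mu> ?A = 0"
      using AE_iff_measurable[OF sets, of "\<lambda>p. p \<notin> ?A"] MF_D(2)[OF \<mu>] by auto
    with mass show False
      by (simp add: measure_def)
  qed
  then obtain v where v: "\<forall>k. arctan (v $ k) = b k"
    by auto
  have unique: "w = v" if "\<forall>k. arctan (w $ k) = b k" for w
    using that v by (metis arctan_eq_iff vec_eq_iff)
  from coords have "AE p in \<mu>. fst p = i \<longrightarrow> snd p = v"
    by eventually_elim (auto simp: mem_Times_iff intro: unique)
  then show ?thesis ..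
qed

lemma emeasure_eq_card_graph:
  fixes \<mu> :: "(nat list \<times> (real ^ 'n)) measure"
  assumes \<mu>: "\<mu> \<in> MF" and "finite W"
    and graph: "AE p in \<mu>. fst p \<in> W \<and> snd p = x (fst p)"
    and mass: "\<And>i. i \<in> W \<Longrightarrow> measure \<mu> ({i} \<times> UNIV) = 1"
    and A: "A \<in> sets \<mu>"
  shows "emeasure \<mu> A = of_nat (card {i \<in> W. (i, x i) \<in> A})"
proof -
  interpret finite_measure \<mu>
    using MF_D(3)[OF \<mu>] .
  let ?G = "(\<lambda>i. (i, x i)) ` W"
  note singleton = sets_MF_singleton[OF \<mu>]
  have "?G = (\<Union>q\<in>?G. {q})"
    by auto
  also have "\<dots> \<in> sets \<mu>"
    using \<open>finite W\<close> singleton by (intro sets.finite_UN) auto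
  finally have G: "?G \<in> sets \<mu>" .
  have unit: "emeasure \<mu> {(i, x i)} = 1" if "i \<in> W" for i
  proof -
    have "emeasure \<mu> {(i, x i)} = emeasure \<mu> ({i} \<times> UNIV)"
      using graph singleton sets_MF_Times[OF \<mu>]
      by (intro emeasure_eq_AE) (auto elim!: AE_mp)
    also have "\<dots> = 1"
      using mass[OF that] by (simp add: emeasure_eq_measure)
    finally show ?thesis .
  qed
  have "emeasure \<mu> A = emeasure \<mu> (A \<inter> ?G)"
    using graph A G by (intro emeasure_eq_AE) (auto elim!: AE_mp)
  also have "\<dots> = (\<Sum>q\<in>A \<inter> ?G. emeasure \<mu> {q})"
    using \<open>finite W\<close> singleton by (intro emeasure_eq_sum_singleton) auto
  also have "\<dots> = (\<Sum>q\<in>A \<inter> ?G. 1)"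
    using unit by (intro sum.cong) auto
  also have "\<dots> = of_nat (card (A \<inter> ?G))"
    by simp
  also have "A \<inter> ?G = (\<lambda>i. (i, x i)) ` {i \<in> W. (i, x i) \<in> A}"
    by auto
  also have "card \<dots> = card {i \<in> W. (i, x i) \<in> A}"
    by (rule card_image) (auto simp: inj_on_def)
  finally show ?thesis .
qed

lemma AE_graph_of_fibres:
  fixes \<mu> :: "(nat list \<times> (real ^ 'n)) measure"
  assumes \<mu>: "\<mu> \<in> MF"
    and null: "\<And>i. i \<notin> W \<Longrightarrow> measure \<mu> ({i} \<times> UNIV) = 0"
    and fibre: "\<And>i. i \<in> W \<Longrightarrow> AE p in \<mu>. fst p = i \<longrightarrow> snd p = x i"
  shows "AE p in \<mu>. fst p \<in> W \<and> snd p = x (fst p)"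
proof -
  interpret finite_measure \<mu>
    using MF_D(3)[OF \<mu>] .
  have off: "AE p in \<mu>. fst p \<noteq> i" if "i \<notin> W" for i
  proof -
    have "{i} \<times> UNIV \<in> null_sets \<mu>"
      using null[OF that] sets_MF_Times[OF \<mu>] by (simp add: emeasure_eq_measure null_sets_def)
    then show ?thesis
      by (rule AE_not_in[THEN AE_mp]) auto
  qed
  have "AE p in \<mu>. (i \<in> W \<longrightarrow> fst p = i \<longrightarrow> snd p = x i) \<and> (i \<notin> W \<longrightarrow> fst p \<noteq> i)" for i
    using fibre off by (cases "i \<in> W") simp_all
  then have "AE p in \<mu>. \<forall>i. (i \<in> W \<longrightarrow> fst p = i \<longrightarrow> snd p = x i) \<and> (i \<notin> W \<longrightarrow> fst p \<noteq> i)"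
    by (subst AE_all_countable) blast
  then show ?thesis
    by eventually_elim blast
qed

lemma E_criterion_imp_E:
  fixes \<mu> :: "(nat list \<times> (real ^ 'n)) measure"
  assumes \<mu>: "\<mu> \<in> MF" and criterion: "E_criterion \<mu>"
  shows "\<mu> \<in> E"
proof -
  interpret finite_measure \<mu>
    using MF_D(3)[OF \<mu>] .
  define W where "W = {i. measure \<mu> ({i} \<times> UNIV) = 1}"
  have "finite W"
    unfolding W_def using sets_MF_Times[OF \<mu>]
    by (intro finite_unit_measure_family) (auto simp: disjoint_family_on_def)
  have antichain: "\<not> word_prec i j" if "i \<in> W" "j \<in> W" for i j
  proof
    assume prec: "word_prec i j"
    then have "measure \<mu> ({i, j} \<times> UNIV) = 2"
      using that measure_Times_doubleton[OF \<mu>, of i j] by (auto simp: W_def word_prec_def)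
    moreover have "measure \<mu> ({i, j} \<times> UNIV) \<in> {0, 1}"
      using criterion prec by (simp add: E_criterion_def)
    ultimately show False
      by simp
  qed
  have "\<forall>i\<in>W. \<exists>v. AE p in \<mu>. fst p = i \<longrightarrow> snd p = v"
    using criterion by (auto simp: W_def E_criterion_def intro!: AE_fibre_eq_const[OF \<mu>])
  then have "\<exists>x. \<forall>i\<in>W. AE p in \<mu>. fst p = i \<longrightarrow> snd p = x i"
    by (rule bchoice)
  then obtain x where x: "\<forall>i\<in>W. AE p in \<mu>. fst p = i \<longrightarrow> snd p = x i" ..
  have graph: "AE p in \<mu>. fst p \<in> W \<and> snd p = x (fst p)"
    using criterion x by (intro AE_graph_of_fibres[OF \<mu>]) (auto simp: W_def E_criterion_def)
  show ?thesis
    unfolding E_def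
  proof (intro CollectI exI conjI ballI)
    show "finite W" "sets \<mu> = sets IRspace" "\<And>i j. i \<in> W \<Longrightarrow> j \<in> W \<Longrightarrow> \<not> word_prec i j"
      using \<open>finite W\<close> MF_D(1)[OF \<mu>] antichain by blast+
    show "emeasure \<mu> A = of_nat (card {i \<in> W. (i, x i) \<in> A})" if "A \<in> sets \<mu>" for A
      by (rule emeasure_eq_card_graph[OF \<mu> \<open>finite W\<close> graph _ that]) (simp add: W_def)
  qed
qed

lemma E_eq_E_criterion: "(E :: (nat list \<times> (real ^ 'n)) measure set) = {\<mu> \<in> MF. E_criterion \<mu>}"
  using E_subset_MF E_imp_E_criterion E_criterion_imp_E by blast

theorem propositionA1:
  shows "closedin (weak_top :: (nat list \<times> (real ^ 'n)) measure topology) (E :: (nat list \<times> (real ^ 'n)) measure set)"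
  using closedin_E_criterion by (simp add: E_eq_E_criterion topspace_weak_top)

end
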